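(* Let $d,k\ge 1$ and let $F=\{F^{(1)},\ldots,F^{(k)}\}$ be an SNRE of degree $(d,k)$, with associated sequences $(\gamma_{i;n})_{n\ge 0}$, $1\le i\le k$. Let $i,j\in\{1,\dots,k\}$. If the symbol $j$ is essential and $i$ induces $j$ (i.e. $i\to j$), then $i$ is essential.
   Context: An SNRE (system of nonlinear recursive equations) of degree $(d,k)$ consists of $k$ nonzero homogeneous polynomials $F^{(1)},\ldots,F^{(k)}$ of degree $d$ in $k$ variables $x_1,\dots,x_k$ with nonnegative integer coefficients, together with the sequences defined by $\gamma_{i;0}=1$ and $\gamma_{i;n}=F^{(i)}(\gamma_{1;n-1},\ldots,\gamma_{k;n-1})$ for $n\ge 1$, $1\le i\le k$ (so all $\gamma_{i;n}$ are positive integers). The symbol $i$ induces $j$, written $i\to j$, if the variable $x_j$ occurs in some monomial of $F^{(i)}$ having nonzero coefficient. A symbol $i$ is essential if $\gamma_{i;n}\ge 2$ for some $n\in\mathbb{N}$, and inessential otherwise (i.e. $\gamma_{i;n}=1$ for all $n$). *)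

theory Defs
  imports Main
begin

(* Symbols/variables are indexed by 0..<k (paper: 1..k).
  A polynomial in k variables with nonnegative integer coefficients is
  a coefficient function from exponent vectors (nat => nat) to nat. *)

definition mon_set :: "nat \<Rightarrow> nat \<Rightarrow> (nat \<Rightarrow> nat) set" where
  "mon_set k d = {\<alpha>. (\<forall>j\<ge>k. \<alpha> j = 0) \<and> (\<Sum>j<k. \<alpha> j) = d}"

definition hom_poly :: "nat \<Rightarrow> nat \<Rightarrow> ((nat \<Rightarrow> nat) \<Rightarrow> nat) \<Rightarrow> bool" where
  "hom_poly k d P \<longleftrightarrow> (\<forall>\<alpha>. P \<alpha> \<noteq> 0 \<longrightarrow> \<alpha> \<in> mon_set k d) \<and> (\<exists>\<alpha>. P \<alpha> \<noteq> 0)"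

definition eval_poly :: "nat \<Rightarrow> nat \<Rightarrow> ((nat \<Rightarrow> nat) \<Rightarrow> nat) \<Rightarrow> (nat \<Rightarrow> nat) \<Rightarrow> nat" where
  "eval_poly k d P x = (\<Sum>\<alpha>\<in>mon_set k d. P \<alpha> * (\<Prod>j<k. x j ^ \<alpha> j))"

definition SNRE :: "nat \<Rightarrow> nat \<Rightarrow> (nat \<Rightarrow> (nat \<Rightarrow> nat) \<Rightarrow> nat) \<Rightarrow> bool" where
  "SNRE d k F \<longleftrightarrow> (\<forall>i<k. hom_poly k d (F i))"

primrec gamma :: "nat \<Rightarrow> nat \<Rightarrow> (nat \<Rightarrow> (nat \<Rightarrow> nat) \<Rightarrow> nat) \<Rightarrow> nat \<Rightarrow> nat \<Rightarrow> nat" where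
  "gamma d k F 0 = (\<lambda>i. 1)"
| "gamma d k F (Suc n) = (\<lambda>i. eval_poly k d (F i) (gamma d k F n))"

definition induces :: "(nat \<Rightarrow> (nat \<Rightarrow> nat) \<Rightarrow> nat) \<Rightarrow> nat \<Rightarrow> nat \<Rightarrow> bool" where
  "induces F i j \<longleftrightarrow> (\<exists>\<alpha>. F i \<alpha> \<noteq> 0 \<and> \<alpha> j \<noteq> 0)"

definition essential :: "nat \<Rightarrow> nat \<Rightarrow> (nat \<Rightarrow> (nat \<Rightarrow> nat) \<Rightarrow> nat) \<Rightarrow> nat \<Rightarrow> bool" where
  "essential d k F i \<longleftrightarrow> (\<exists>n. gamma d k F n i \<ge> 2)"

end

theory Submission
  imports Defs "HOL-Library.FuncSet"
begin

(* All gamma_{l;n} are at least 1, so a single monomial of F^(i) containing x_j already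
   bounds gamma_{i;n+1} from below by a positive power of gamma_{j;n}, which is at least 2
   for a suitable n. *)

lemma finite_mon_set: "finite (mon_set k d)"
proof -
  let ?r = "\<lambda>\<alpha>::nat\<Rightarrow>nat. restrict \<alpha> {..<k}"
  have "inj_on ?r (mon_set k d)"
  proof (rule inj_onI)
    fix a b assume a: "a \<in> mon_set k d" and b: "b \<in> mon_set k d" and ab: "?r a = ?r b"
    show "a = b"
    proof
      fix j show "a j = b j"
        using fun_cong[OF ab, of j] a b by (cases "j < k") (auto simp: mon_set_def)
    qed
  qed
  moreover have "?r ` mon_set k d \<subseteq> PiE {..<k} (\<lambda>_. {..d})"
  proof
    fix y assume "y \<in> ?r ` mon_set k d"
    then obtain a where a: "a \<in> mon_set k d" and y: "y = ?r a" by auto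
    have "a j \<le> d" if "j < k" for j
    proof -
      have "a j \<le> (\<Sum>j<k. a j)" using that by (intro member_le_sum) auto
      with a show ?thesis by (simp add: mon_set_def)
    qed
    with y show "y \<in> PiE {..<k} (\<lambda>_. {..d})" by auto
  qed
  then have "finite (?r ` mon_set k d)" by (rule finite_subset) (simp add: finite_PiE)
  ultimately show ?thesis using finite_imageD by blast
qed

lemma monomial_le_eval_poly:
  assumes "\<alpha> \<in> mon_set k d"
  shows "P \<alpha> * (\<Prod>j<k. x j ^ \<alpha> j) \<le> eval_poly k d P x"
  unfolding eval_poly_def
  using assms by (intro member_le_sum) (auto simp: finite_mon_set)

lemma power_le_monomial:
  fixes x \<alpha> :: "nat \<Rightarrow> nat"
  assumes "j < k" and "\<And>l. l < k \<Longrightarrow> x l \<ge> 1"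
  shows "x j ^ \<alpha> j \<le> (\<Prod>l<k. x l ^ \<alpha> l)"
proof -
  have "(\<Prod>l\<in>{..<k}-{j}. x l ^ \<alpha> l) \<ge> 1"
    using assms(2) by (intro prod_ge_1) (simp add: one_le_power)
  moreover have "(\<Prod>l<k. x l ^ \<alpha> l) = x j ^ \<alpha> j * (\<Prod>l\<in>{..<k}-{j}. x l ^ \<alpha> l)"
    using assms(1) by (subst prod.remove[of _ j]) auto
  ultimately show ?thesis by simp
qed

lemma gamma_ge_1:
  assumes "SNRE d k F" and "l < k"
  shows "gamma d k F n l \<ge> 1"
  using assms(2)
proof (induction n arbitrary: l)
  case 0
  then show ?case by simp
next
  case (Suc n)
  with assms(1) obtain \<alpha> where \<alpha>: "F l \<alpha> \<noteq> 0" "\<alpha> \<in> mon_set k d"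
    by (auto simp: SNRE_def hom_poly_def)
  have "1 \<le> (\<Prod>j<k. gamma d k F n j ^ \<alpha> j)"
    using Suc.IH by (intro prod_ge_1) (simp add: one_le_power)
  also have "\<dots> \<le> F l \<alpha> * (\<Prod>j<k. gamma d k F n j ^ \<alpha> j)"
    using \<alpha>(1) by simp
  also have "\<dots> \<le> gamma d k F (Suc n) l"
    using monomial_le_eval_poly[OF \<alpha>(2)] by simp
  finally show ?case .
qed

theorem lemma1:
  fixes d k :: nat and F :: "nat \<Rightarrow> (nat \<Rightarrow> nat) \<Rightarrow> nat" and i j :: nat
  assumes "d \<ge> 1" and "k \<ge> 1"
    and "SNRE d k F"
    and "i < k" and "j < k"
    and "essential d k F j"
    and "induces F i j"
  shows "essential d k F i"
proof -
  obtain n where n: "gamma d k F n j \<ge> 2"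
    using assms(6) by (auto simp: essential_def)
  obtain \<alpha> where \<alpha>: "F i \<alpha> \<noteq> 0" "\<alpha> j \<noteq> 0"
    using assms(7) by (auto simp: induces_def)
  have \<alpha>_mon: "\<alpha> \<in> mon_set k d"
    using \<alpha>(1) assms(3,4) by (auto simp: SNRE_def hom_poly_def)
  let ?g = "gamma d k F n"
  have "2 \<le> ?g j" by (rule n)
  also have "\<dots> \<le> ?g j ^ \<alpha> j" using \<alpha>(2) n by (simp add: self_le_power)
  also have "\<dots> \<le> (\<Prod>l<k. ?g l ^ \<alpha> l)"
    using assms(5) gamma_ge_1[OF assms(3)] by (rule power_le_monomial)
  also have "\<dots> \<le> F i \<alpha> * (\<Prod>l<k. ?g l ^ \<alpha> l)" using \<alpha>(1) by simp
  also have "\<dots> \<le> gamma d k F (Suc n) i" using monomial_le_eval_poly[OF \<alpha>_mon] by simp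
  finally show ?thesis unfolding essential_def by blast
qed

end
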